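(* Let $V\colon[-1,1]\to[0,1]$ be a smooth function with $V(-1)=V(1)=1$ and $V(0)=0$, strictly decreasing on $[-1,0]$ and strictly increasing on $[0,1]$. Let $$T^*S^2=\{(x,y,z,u,v,w)\in\mathbb{R}^6 \mid x^2+y^2+z^2=1,\ xu+yv+zw=0\},$$ and define $F=(J,H)\colon T^*S^2\to\mathbb{R}^2$ by $$J=xv-yu,\qquad H=\tfrac12(u^2+v^2+w^2)+V(z).$$ Then the image of $F$ is the epigraph $$F(T^*S^2)=\Big\{(j,h)\in\mathbb{R}^2 \;\Big|\; j\in\mathbb{R},\ h\ge \tfrac{j^2}{2}\Big\},$$ and for every $j\in\mathbb{R}$ the fiber $F^{-1}\big(j,\tfrac{j^2}{2}\big)$ is a circle.
   Context: $T^*S^2$ is realized as a submanifold of $T^*\mathbb{R}^3\cong\mathbb{R}^6$ with position coordinates $(x,y,z)$ and momentum coordinates $(u,v,w)$; $J$ is the angular momentum about the $z$-axis and $H$ is the mechanical energy of the spherical pendulum with potential $V$. *)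

theory Defs
  imports "HOL-Analysis.Analysis"
begin

definition smooth_on_real :: "real set \<Rightarrow> (real \<Rightarrow> real) \<Rightarrow> bool" where
  "smooth_on_real S f \<longleftrightarrow>
     (\<exists>D :: nat \<Rightarrow> real \<Rightarrow> real. (\<forall>x\<in>S. D 0 x = f x) \<and>
        (\<forall>n. \<forall>x\<in>S. (D n has_real_derivative D (Suc n) x) (at x within S)))"

definition TstarS2 :: "(real \<times> real \<times> real \<times> real \<times> real \<times> real) set" where
  "TstarS2 = {(x,y,z,u,v,w). x^2 + y^2 + z^2 = 1 \<and> x * u + y * v + z * w = 0}"

definition momentum_map :: "(real \<Rightarrow> real) \<Rightarrow> real \<times> real \<times> real \<times> real \<times> real \<times> real \<Rightarrow> real \<times> real" where
  "momentum_map V = (\<lambda>(x,y,z,u,v,w). (x * v - y * u, (u^2 + v^2 + w^2)/2 + V z))"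

end

theory Submission
  imports Defs
begin

text \<open>By Lagrange's identity the angular momentum satisfies J^2 \<le> u^2 + v^2 on T*S^2,
and V \<ge> 0, so H \<ge> J^2/2; every such value is attained over the point (1,0,0).
Equality forces w = 0 and V z = 0, i.e. z = 0, so the point lies on the equator with
momentum tangent to it; tangency and the value of J then fix (u,v) = J (-y,x). Hence the
fibre of minimal energy is the uniform rotation along the equator, a copy of the circle.\<close>

lemma angular_momentum_sq_le:
  fixes x y u v :: real
  shows "(x * v - y * u)^2 \<le> (x^2 + y^2) * (u^2 + v^2)"
proof -
  have "(x * v - y * u)^2 + (x * u + y * v)^2 = (x^2 + y^2) * (u^2 + v^2)"
    by algebra
  then show ?thesis
    by (metis le_add_same_cancel1 zero_le_power2)
qed

lemma TstarS2_height_bound: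
  assumes "(x, y, z, u, v, w) \<in> TstarS2"
  shows "z \<in> {-1..1}"
proof -
  have "z^2 \<le> 1"
    using assms by (simp add: TstarS2_def) (smt (verit) zero_le_power2)
  then show ?thesis
    by (simp add: abs_square_le_1 abs_le_iff)
qed

lemma TstarS2_angular_momentum_sq_le:
  assumes "(x, y, z, u, v, w) \<in> TstarS2"
  shows "(x * v - y * u)^2 \<le> u^2 + v^2"
proof -
  have "x^2 + y^2 \<le> 1"
    using assms by (simp add: TstarS2_def) (smt (verit) zero_le_power2)
  then have "(x^2 + y^2) * (u^2 + v^2) \<le> u^2 + v^2"
    by (simp add: mult_left_le_one_le)
  then show ?thesis
    using angular_momentum_sq_le order_trans by blast
qed

lemma strict_valley_unique_min:
  fixes V :: "real \<Rightarrow> real"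
  assumes "strict_antimono_on {a..c} V" and "strict_mono_on {c..b} V"
    and "z \<in> {a..b}" and "V z \<le> V c"
  shows "z = c"
proof (rule ccontr)
  assume "z \<noteq> c"
  then have "V c < V z"
    using assms by (cases "z < c") (auto simp: monotone_on_def)
  then show False
    using assms(4) by simp
qed

lemma TstarS2_energy_ge:
  assumes "(x, y, z, u, v, w) \<in> TstarS2" and "V ` {-1..1} \<subseteq> {0..}"
  shows "(x * v - y * u)^2/2 \<le> (u^2 + v^2 + w^2)/2 + V z"
proof -
  have "0 \<le> V z"
    using assms(2) TstarS2_height_bound[OF assms(1)] by (auto simp: image_subset_iff)
  moreover have "(x * v - y * u)^2 \<le> u^2 + v^2"
    using TstarS2_angular_momentum_sq_le[OF assms(1)] .
  moreover have "0 \<le> w^2"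
    by simp
  ultimately have "(x * v - y * u)^2 \<le> u^2 + v^2 + w^2 + 2 * V z"
    by linarith
  then show ?thesis
    by (simp add: field_simps)
qed

lemma momentum_map_image:
  assumes "V ` {-1..1} \<subseteq> {0..}" and "V 0 = 0"
  shows "momentum_map V ` TstarS2 = {(j, h). j^2/2 \<le> h}"
proof
  show "momentum_map V ` TstarS2 \<subseteq> {(j, h). j^2/2 \<le> h}"
    using TstarS2_energy_ge[OF _ assms(1)] by (force simp: momentum_map_def)
next
  show "{(j, h). j^2/2 \<le> h} \<subseteq> momentum_map V ` TstarS2"
  proof clarify
    fix j h :: real
    assume "j^2/2 \<le> h"
    then have "(sqrt (2 * h - j^2))^2 = 2 * h - j^2"
      by simp
    then have "momentum_map V (1, 0, 0, 0, j, sqrt (2 * h - j^2)) = (j, h)"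
      using assms(2) by (simp add: momentum_map_def)
    moreover have "(1, 0, 0, 0, j, sqrt (2 * h - j^2)) \<in> TstarS2"
      by (simp add: TstarS2_def)
    ultimately show "(j, h) \<in> momentum_map V ` TstarS2"
      by (metis image_eqI)
  qed
qed

definition equator_state :: "real \<Rightarrow> complex \<Rightarrow> real \<times> real \<times> real \<times> real \<times> real \<times> real" where
  "equator_state j c = (Re c, Im c, 0, - j * Im c, j * Re c, 0)"

lemma homeomorphic_equator_states:
  assumes "compact S"
  shows "S homeomorphic equator_state j ` S"
proof (rule homeomorphic_compact)
  show "continuous_on S (equator_state j)"
    unfolding equator_state_def by (intro continuous_intros)
  show "inj_on (equator_state j) S"
    by (auto simp: inj_on_def equator_state_def complex_eq_iff)
qed (use assms in auto)

lemma minimal_energy_fiber: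
  assumes "V ` {-1..1} \<subseteq> {0..}" and "V 0 = 0"
    and "\<And>z. z \<in> {-1..1} \<Longrightarrow> V z = 0 \<Longrightarrow> z = 0"
  shows "momentum_map V -` {(j, j^2/2)} \<inter> TstarS2 = equator_state j ` sphere 0 1"
proof
  show "equator_state j ` sphere 0 1 \<subseteq> momentum_map V -` {(j, j^2/2)} \<inter> TstarS2"
  proof (rule image_subsetI)
    fix c :: complex
    assume "c \<in> sphere 0 1"
    then have c: "(Re c)^2 + (Im c)^2 = 1"
      by (simp add: cmod_def)
    have "Re c * (j * Re c) - Im c * (- j * Im c) = j"
      and "(- j * Im c)^2 + (j * Re c)^2 = j^2"
      using c by algebra+
    then have "momentum_map V (equator_state j c) = (j, j^2/2)"
      using assms(2) by (simp add: equator_state_def momentum_map_def)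
    moreover have "Re c * (- j * Im c) + Im c * (j * Re c) = 0"
      by algebra
    then have "equator_state j c \<in> TstarS2"
      using c by (simp add: equator_state_def TstarS2_def)
    ultimately show "equator_state j c \<in> momentum_map V -` {(j, j^2/2)} \<inter> TstarS2"
      by simp
  qed
next
  show "momentum_map V -` {(j, j^2/2)} \<inter> TstarS2 \<subseteq> equator_state j ` sphere 0 1"
  proof (rule subsetI)
    fix p
    assume "p \<in> momentum_map V -` {(j, j^2/2)} \<inter> TstarS2"
    moreover obtain x y z u v w where xyz: "p = (x, y, z, u, v, w)"
      by (metis prod_cases6)
    ultimately have p: "(x, y, z, u, v, w) \<in> TstarS2"
      and J: "x * v - y * u = j" and H: "u^2 + v^2 + w^2 + 2 * V z = j^2"
      by (auto simp: momentum_map_def field_simps)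
    have "0 \<le> V z"
      using assms(1) TstarS2_height_bound[OF p] by (auto simp: image_subset_iff)
    moreover have "j^2 \<le> u^2 + v^2"
      using TstarS2_angular_momentum_sq_le[OF p] J by simp
    moreover have "0 \<le> w^2"
      by simp
    ultimately have "w^2 = 0" and "V z = 0"
      using H by linarith+
    then have w: "w = 0" and z: "z = 0"
      using assms(3) TstarS2_height_bound[OF p] by auto
    have xy: "x^2 + y^2 = 1" and tangent: "x * u + y * v = 0"
      using p z by (auto simp: TstarS2_def)
    \<comment> \<open>orthogonal decomposition of (u,v) along (x,y) and (-y,x)\<close>
    have "u = x * (x * u + y * v) - y * (x * v - y * u)"
      using xy by algebra
    also have "\<dots> = - j * y"
      by (simp add: tangent J)
    finally have u: "u = - j * y" .
    have "v = y * (x * u + y * v) + x * (x * v - y * u)"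
      using xy by algebra
    also have "\<dots> = j * x"
      by (simp add: tangent J)
    finally have v: "v = j * x" .
    have "equator_state j (Complex x y) = p"
      using xyz u v w z by (simp add: equator_state_def)
    moreover have "Complex x y \<in> sphere 0 1"
      using xy by (simp add: cmod_def)
    ultimately show "p \<in> equator_state j ` sphere 0 1"
      by (metis image_eqI)
  qed
qed

theorem mainTheorem1:
  fixes V :: "real \<Rightarrow> real"
  assumes "smooth_on_real {-1..1} V"
    and "V ` {-1..1} \<subseteq> {0..1}"
    and "V (-1) = 1" and "V 1 = 1" and "V 0 = 0"
    and "strict_antimono_on {-1..0} V"
    and "strict_mono_on {0..1} V"
  shows "momentum_map V ` TstarS2 = {(j,h). h \<ge> j^2/2}
    \<and> (\<forall>j::real. (momentum_map V -` {(j, j^2/2)} \<inter> TstarS2) homeomorphic sphere (0::complex) 1)"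
proof -
  have nonneg: "V ` {-1..1} \<subseteq> {0..}"
    using assms(2) by auto
  have unique_zero: "z = 0" if "z \<in> {-1..1}" "V z = 0" for z
    using strict_valley_unique_min[OF assms(6,7) that(1)] that(2) assms(5) by simp
  have "momentum_map V -` {(j, j^2/2)} \<inter> TstarS2 homeomorphic sphere (0::complex) 1" for j
  proof -
    have "equator_state j ` sphere 0 1 homeomorphic sphere (0::complex) 1"
      using homeomorphic_equator_states[of "sphere 0 1" j] homeomorphic_sym by auto
    then show ?thesis
      using minimal_energy_fiber[OF nonneg assms(5) unique_zero, of j] by simp
  qed
  with momentum_map_image[OF nonneg assms(5)] show ?thesis
    by blast
qed

end
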